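(* For every $q,r\in(0,\infty)$ there exists a constant $C=C(q,r)$ such that for every function $f\in L^q_\nu(\ell^r_\omega)$ on $X=\mathbb R\times(0,\infty)\times\mathbb R$ there exists $J=J(q,r,f)\in\mathbb N$ with $$\|f1_{X_J}\|_{L^q_\nu(\ell^r_\omega)}\le\|f\|_{L^q_\nu(\ell^r_\omega)}\le C\|f1_{X_J}\|_{L^q_\nu(\ell^r_\omega)},$$ where $X_J=(-2^JJ,2^JJ]\times(2^{-J},2^J]\times(-2^JJ,2^JJ]$.
   Context: $\omega$ is Lebesgue measure on $X$. Dyadic intervals $I(m,l)=(2^lm,2^l(m+1)]$; tiles $H(m,l,n)=I(m,l)\times(2^{l-1},2^l]\times I(n,-l)$. Dyadic trees $T(m,l,n)=\bigcup_{l'\le l}\bigcup_{m':\,I(m',l')\subseteq I(m,l)}H(m',l',N(n,l'))$ ($N(n,l')$ the integer with $I(n,-l)\subseteq I(N(n,l'),-l')$) form $\mathcal T$, with $\tau(T(m,l,n))=2^l$; $\nu(A)=\inf\{\sum_{S\in\mathcal S'}\tau(S):\mathcal S'\subseteq\mathcal T,A\subseteq\bigcup\mathcal S'\}$. For $\omega$-measurable $f$: $\ell^r_\omega(f)(T)=\nu(T)^{-1/r}\|f1_T\|_{L^r(X,\omega)}$ for $T\in\mathcal T$; $\|f\|_{L^\infty_\nu(\ell^r_\omega)}=\sup_{T\in\mathcal T}\ell^r_\omega(f)(T)$; $\nu(\ell^r_\omega(f)>\lambda)=\inf\{\nu(B):B\text{ measurable},\|f1_{X\setminus B}\|_{L^\infty_\nu(\ell^r_\omega)}\le\lambda\}$;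 $\|f\|_{L^q_\nu(\ell^r_\omega)}=(\int_0^\infty q\lambda^{q-1}\nu(\ell^r_\omega(f)>\lambda)d\lambda)^{1/q}$, and $f\in L^q_\nu(\ell^r_\omega)$ means this is finite. *)

theory Defs
  imports "HOL-Analysis.Analysis"
begin

type_synonym pt = "real \<times> real \<times> real"

definition Xsp :: "pt set" where
  "Xsp = {(x, s, \<xi>). s > 0}"

abbreviation omega :: "pt measure" where
  "omega \<equiv> lebesgue_on Xsp"

definition enn_powr :: "ennreal \<Rightarrow> real \<Rightarrow> ennreal" where
  "enn_powr a p = (if a = \<infinity> then \<infinity> else ennreal (enn2real a powr p))"

definition dyI :: "int \<Rightarrow> int \<Rightarrow> real set" where
  "dyI m l = {(2::real) powi l * of_int m <.. (2::real) powi l * (of_int m + 1)}"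

definition tile :: "int \<Rightarrow> int \<Rightarrow> int \<Rightarrow> pt set" where
  "tile m l n = dyI m l \<times> {(2::real) powi (l - 1) <.. (2::real) powi l} \<times> dyI n (- l)"

definition Nidx :: "int \<Rightarrow> int \<Rightarrow> int \<Rightarrow> int" where
  "Nidx n l l' = (THE k. dyI n (- l) \<subseteq> dyI k (- l'))"

definition tree :: "int \<Rightarrow> int \<Rightarrow> int \<Rightarrow> pt set" where
  "tree m l n = (\<Union>l'\<in>{..l}. \<Union>m'\<in>{m'. dyI m' l' \<subseteq> dyI m l}. tile m' l' (Nidx n l l'))"

definition tau :: "int \<times> int \<times> int \<Rightarrow> ennreal" where
  "tau t = (case t of (m, l, n) \<Rightarrow> ennreal ((2::real) powi l))"

definition nu :: "pt set \<Rightarrow> ennreal" where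
  "nu A = (INF S \<in> {S. A \<subseteq> (\<Union>(m, l, n)\<in>S. tree m l n)}. \<integral>\<^sup>+ t. tau t \<partial>count_space S)"

definition Lr_norm :: "real \<Rightarrow> (pt \<Rightarrow> complex) \<Rightarrow> ennreal" where
  "Lr_norm r f = enn_powr (\<integral>\<^sup>+ x. ennreal (norm (f x) powr r) \<partial>omega) (1 / r)"

definition ell :: "real \<Rightarrow> (pt \<Rightarrow> complex) \<Rightarrow> pt set \<Rightarrow> ennreal" where
  "ell r f T = Lr_norm r (\<lambda>x. indicator T x * f x) / enn_powr (nu T) (1 / r)"

definition Linf_nu :: "real \<Rightarrow> (pt \<Rightarrow> complex) \<Rightarrow> ennreal" where
  "Linf_nu r f = (SUP (m, l, n) \<in> UNIV. ell r f (tree m l n))"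

definition super_level :: "real \<Rightarrow> (pt \<Rightarrow> complex) \<Rightarrow> real \<Rightarrow> ennreal" where
  "super_level r f lam = (INF B \<in> {B. B \<in> sets omega \<and>
       Linf_nu r (\<lambda>x. indicator (Xsp - B) x * f x) \<le> ennreal lam}. nu B)"

definition Lq_nu :: "real \<Rightarrow> real \<Rightarrow> (pt \<Rightarrow> complex) \<Rightarrow> ennreal" where
  "Lq_nu q r f = enn_powr
     (\<integral>\<^sup>+ lam\<in>{0<..}. ennreal (q * lam powr (q - 1)) * super_level r f lam \<partial>lborel) (1 / q)"

definition XJ :: "nat \<Rightarrow> pt set" where
  "XJ J = {(2::real) ^ J * (- real J) <.. 2 ^ J * real J}
          \<times> {(2::real) powi (- int J) <.. 2 ^ J}
          \<times> {(2::real) ^ J * (- real J) <.. 2 ^ J * real J}"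

end

theory Submission
  imports Defs
begin

(* Restricting f to X_J only decreases every quantity entering the L^q_nu(ell^r_omega) quasi-norm,
   which gives the first inequality; the second one holds with C = 2.

   The key point is that for every lambda the super level measure nu(ell^r_omega(f) > lambda) is the
   supremum over J of the super level measures of f 1_{X_J}. Monotone convergence then makes
   ||f 1_{X_J}||^q increase to ||f||^q, so that ||f||^q <= 2^q ||f 1_{X_J}||^q for some J.

   To see the key point, let M exceed that supremum and pick for every J a countable collection
   S_J of trees with sum tau < M whose union B_J satisfies
   ||f 1_{X_J} 1_{X - B_J}||_{L^oo_nu(ell^r_omega)} <= lambda.
   Collections of trees are points of the compact space of boolean functions on the countable
   index set, so a subsequence S_{J_k} converges pointwise to a collection S, of total size at most
   M by Fatou's lemma. A point of X lies in only finitely many trees with tau < M, hence for large k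
   it lies in the union of S_{J_k} only if it lies in the union of S, and it lies in X_{J_k}.
   Fatou's lemma on each tree then shows that the union of S is admissible at level lambda. *)

section \<open>Monotonicity of the outer-measure quasi-norms\<close>

lemma enn_powr_mono:
  assumes "a \<le> b" "0 < e"
  shows "enn_powr a e \<le> enn_powr b e"
proof (cases "b = \<infinity>")
  case True
  then show ?thesis by (simp add: enn_powr_def)
next
  case False
  then have "a \<noteq> \<infinity>"
    using assms(1) top.extremum_unique by fastforce
  moreover have "enn2real a \<le> enn2real b"
    using enn2real_mono[OF assms(1)] False by (simp add: top.not_eq_extremum)
  ultimately show ?thesis
    using False assms by (auto simp: enn_powr_def intro!: ennreal_leI powr_mono2)
qed

lemma space_omega [simp]: "space omega = Xsp"
  by (simp add: space_restrict_space)

lemma norm_indicator_mult_mono: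
  "A \<subseteq> B \<Longrightarrow> norm (indicator A x * f x) \<le> norm (indicator B x * (f x :: complex))"
  by (auto simp: indicator_def)

lemma norm_indicator_mult_le: "norm (indicator A x * f x) \<le> norm (f x :: complex)"
  by (auto simp: indicator_def)

lemma Lr_norm_mono:
  assumes "\<And>x. norm (f x) \<le> norm (g x)" "0 < r"
  shows "Lr_norm r f \<le> Lr_norm r g"
  unfolding Lr_norm_def using assms
  by (intro enn_powr_mono nn_integral_mono ennreal_leI powr_mono2) auto

lemma ell_mono:
  assumes "\<And>x. norm (f x) \<le> norm (g x)" "0 < r"
  shows "ell r f T \<le> ell r g T"
  unfolding ell_def divide_ennreal_def
  by (intro mult_right_mono Lr_norm_mono) (auto simp: norm_mult assms mult_left_mono)

lemma Linf_nu_mono: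
  assumes "\<And>x. norm (f x) \<le> norm (g x)" "0 < r"
  shows "Linf_nu r f \<le> Linf_nu r g"
  unfolding Linf_nu_def
  by (rule SUP_subset_mono) (auto simp: split_beta intro: ell_mono[OF assms])

lemma super_level_mono:
  assumes "\<And>x. norm (f x) \<le> norm (g x)" "0 < r"
  shows "super_level r f lam \<le> super_level r g lam"
  unfolding super_level_def
proof (rule INF_superset_mono)
  have "Linf_nu r (\<lambda>x. indicator (Xsp - B) x * f x) \<le> Linf_nu r (\<lambda>x. indicator (Xsp - B) x * g x)"
    for B
    by (rule Linf_nu_mono) (auto simp: norm_mult assms mult_left_mono)
  then show "{B \<in> sets omega. Linf_nu r (\<lambda>x. indicator (Xsp - B) x * g x) \<le> ennreal lam}
    \<subseteq> {B \<in> sets omega. Linf_nu r (\<lambda>x. indicator (Xsp - B) x * f x) \<le> ennreal lam}"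
    using order_trans by blast
qed simp

lemma super_level_antimono:
  assumes "lam \<le> lam'"
  shows "super_level r f lam' \<le> super_level r f lam"
  unfolding super_level_def
  by (rule INF_superset_mono) (auto intro: order_trans ennreal_leI[OF assms])

lemma Lq_nu_mono:
  assumes "\<And>x. norm (f x) \<le> norm (g x)" "0 < r" "0 < q"
  shows "Lq_nu q r f \<le> Lq_nu q r g"
  unfolding Lq_nu_def
  by (intro enn_powr_mono nn_integral_mono mult_right_mono mult_left_mono super_level_mono assms) (auto simp: assms)

section \<open>Dyadic geometry of trees\<close>

lemma dyI_unique:
  assumes "y \<in> dyI k1 a" "y \<in> dyI k2 a"
  shows "k1 = k2"
proof -
  define c :: real where "c = 2 powi a"
  have c: "c > 0" by (simp add: c_def)
  have "c * k1 < y" "y \<le> c * (k1 + 1)" "c * k2 < y" "y \<le> c * (k2 + 1)"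
    using assms by (auto simp: dyI_def c_def)
  then have "c * k1 < c * (k2 + 1)" "c * k2 < c * (k1 + 1)"
    by linarith+
  then have "real_of_int k1 < k2 + 1" "real_of_int k2 < k1 + 1"
    using c by (auto simp: mult_less_cancel_left)
  then show ?thesis by linarith
qed

lemma dyI_right_end: "2 powi a * (of_int k + 1) \<in> dyI k a"
  by (simp add: dyI_def)

lemma two_powi_neg_eq:
  assumes "l' \<le> l"
  shows "(2::real) powi (- l') = 2 powi (- l) * of_int ((2::int) ^ nat (l - l'))"
proof -
  have "(2::real) powi (- l') = 2 powi (- l + int (nat (l - l')))"
    using assms by simp
  also have "\<dots> = 2 powi (- l) * 2 powi (int (nat (l - l')))"
    by (rule power_int_add) auto
  also have "(2::real) powi (int (nat (l - l'))) = of_int ((2::int) ^ nat (l - l'))"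
    by (metis power_int_of_nat of_int_numeral of_int_power)
  finally show ?thesis .
qed

lemma dyI_subset_dyI_div:
  assumes "l' \<le> l"
  shows "dyI n (- l) \<subseteq> dyI (n div 2 ^ nat (l - l')) (- l')"
proof
  fix y assume y: "y \<in> dyI n (- l)"
  define D :: int where "D = 2 ^ nat (l - l')"
  define k where "k = n div D"
  have "n = D * k + n mod D"
    unfolding k_def by simp
  moreover have "0 \<le> n mod D" "n mod D < D"
    by (simp_all add: D_def)
  ultimately have "D * k \<le> n" "n + 1 \<le> D * (k + 1)"
    by (simp_all add: distrib_left)
  then have lo: "real_of_int (D * k) \<le> n" and hi: "real_of_int n + 1 \<le> real_of_int (D * (k + 1))"
    by linarith+
  have e: "(2::real) powi (- l') = 2 powi (- l) * D"
    using two_powi_neg_eq[OF assms] by (simp add: D_def)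
  have "2 powi (- l') * real_of_int k = 2 powi (- l) * real_of_int (D * k)"
    by (simp add: e)
  also have "\<dots> \<le> 2 powi (- l) * n"
    using lo by (simp add: mult_left_mono)
  also have "\<dots> < y"
    using y by (simp add: dyI_def)
  finally have lower: "2 powi (- l') * real_of_int k < y" .
  have "y \<le> 2 powi (- l) * (n + 1)"
    using y by (simp add: dyI_def)
  also have "\<dots> \<le> 2 powi (- l) * real_of_int (D * (k + 1))"
    using hi by (simp add: mult_left_mono)
  also have "\<dots> = 2 powi (- l') * (real_of_int k + 1)"
    by (simp add: e)
  finally show "y \<in> dyI (n div 2 ^ nat (l - l')) (- l')"
    using lower by (simp add: dyI_def k_def D_def)
qed

lemma dyI_subset_Nidx:
  assumes "l' \<le> l"
  shows "dyI n (- l) \<subseteq> dyI (Nidx n l l') (- l')"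
proof -
  have "\<exists>!k. dyI n (- l) \<subseteq> dyI k (- l')"
  proof
    show "dyI n (- l) \<subseteq> dyI (n div 2 ^ nat (l - l')) (- l')"
      by (rule dyI_subset_dyI_div[OF assms])
  next
    fix k assume "dyI n (- l) \<subseteq> dyI k (- l')"
    then show "k = n div 2 ^ nat (l - l')"
      using dyI_subset_dyI_div[OF assms] dyI_right_end[of "- l" n] dyI_unique by blast
  qed
  then show ?thesis
    unfolding Nidx_def by (rule theI')
qed

lemma real_less_two_power: "real n < (2::real) ^ n"
  using less_exp[of n] by (metis of_nat_less_iff of_nat_numeral of_nat_power)

lemma abs_le_of_two_powi_between:
  assumes "0 < s" "s \<le> (2::real) powi l" "2 powi l \<le> M"
  shows "\<bar>real_of_int l\<bar> \<le> M + 1 / s"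
proof (cases "0 \<le> l")
  case True
  then have "(2::real) powi l = 2 ^ nat l" "real_of_int l = real (nat l)"
    by (simp_all add: power_int_def)
  moreover have "0 < 1 / s"
    using assms by simp
  ultimately show ?thesis
    using True assms real_less_two_power[of "nat l"] by linarith
next
  case False
  then have "(2::real) powi l = inverse (2 ^ nat (- l))"
    by (metis add.inverse_inverse neg_0_le_iff_le nle_le power_int_minus power_int_of_nat int_nat_eq)
  then have "(2::real) ^ nat (- l) = 1 / 2 powi l"
    by (metis inverse_eq_divide inverse_inverse_eq)
  moreover have "1 / 2 powi l \<le> 1 / s"
    using assms by (intro divide_left_mono) auto
  moreover have "0 \<le> M"
    using assms by linarith
  ultimately show ?thesis
    using False real_less_two_power[of "nat (- l)"] by simp
qed

lemma abs_index_le_of_mem_dyI: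
  assumes "a \<in> dyI m l" "0 < s" "s \<le> 2 powi l"
  shows "\<bar>real_of_int m\<bar> \<le> \<bar>a\<bar> / s + 1"
proof -
  define P :: real where "P = 2 powi l"
  have P: "0 < P" by (simp add: P_def)
  have "P * m < a" "a \<le> P * (m + 1)"
    using assms(1) by (auto simp: dyI_def P_def)
  then have "real_of_int m < a / P" "a / P \<le> real_of_int m + 1"
    using P by (simp_all add: field_simps)
  moreover have "\<bar>a / P\<bar> \<le> \<bar>a\<bar> / s"
    using assms P by (simp add: P_def frac_le)
  ultimately show ?thesis by linarith
qed

lemma abs_index_le_of_mem_dyI_Nidx:
  assumes "l' \<le> l" "b \<in> dyI (Nidx n l l') (- l')" "0 < s" "s \<le> 2 powi l'" "2 powi l \<le> M"
  shows "\<bar>real_of_int n\<bar> \<le> M * (\<bar>b\<bar> + 1 / s) + 1"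
proof -
  define P :: real where "P = 2 powi l"
  define Q :: real where "Q = 2 powi l'"
  define K where "K = Nidx n l l'"
  define y where "y = (of_int n + 1) / P"
  have P: "0 < P" by (simp add: P_def)
  have "0 < M"
    using P assms(5) unfolding P_def by linarith
  have yK: "2 powi (- l) * (of_int n + 1) \<in> dyI K (- l')"
    using dyI_subset_Nidx[OF assms(1), of n] dyI_right_end[of "- l" n] unfolding K_def by blast
  have "K / Q < b" "b \<le> (K + 1) / Q" "K / Q < y" "y \<le> (K + 1) / Q"
    using assms(2) yK by (auto simp: dyI_def y_def K_def P_def Q_def power_int_minus_divide)
  then have "\<bar>y - b\<bar> \<le> 1 / Q"
    by (simp add: add_divide_distrib)
  moreover have "1 / Q \<le> 1 / s"
    using assms by (simp add: Q_def frac_le)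
  ultimately have "\<bar>y\<bar> \<le> \<bar>b\<bar> + 1 / s" by linarith
  then have "P * \<bar>y\<bar> \<le> M * (\<bar>b\<bar> + 1 / s)"
    using assms P \<open>0 < M\<close> by (intro mult_mono) (auto simp: P_def)
  moreover have "\<bar>of_int n + 1\<bar> = P * \<bar>y\<bar>"
    using P by (simp add: y_def abs_mult)
  ultimately show ?thesis by linarith
qed

lemma tree_memE:
  assumes "x \<in> tree m l n"
  obtains l' m' where "l' \<le> l" "dyI m' l' \<subseteq> dyI m l" "x \<in> tile m' l' (Nidx n l l')"
  using assms unfolding tree_def by auto

lemma tree_index_bounds:
  assumes "(a, s, b) \<in> tree m l n" "2 powi l \<le> M"
  shows "\<bar>real_of_int m\<bar> \<le> \<bar>a\<bar> / s + 1 \<and> \<bar>real_of_int l\<bar> \<le> M + 1 / s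
    \<and> \<bar>real_of_int n\<bar> \<le> M * (\<bar>b\<bar> + 1 / s) + 1"
proof -
  obtain l' m' where l': "l' \<le> l" "dyI m' l' \<subseteq> dyI m l" "(a, s, b) \<in> tile m' l' (Nidx n l l')"
    using tree_memE[OF assms(1)] by blast
  have "(2::real) powi l' \<le> 2 powi l"
    using l'(1) by (rule power_int_increasing) auto
  moreover have "2 powi l' / 2 < s" "s \<le> 2 powi l'"
    using l'(3) by (auto simp: tile_def power_int_diff)
  moreover have "0 < (2::real) powi l'" by simp
  ultimately have s: "0 < s" "s \<le> 2 powi l'" "s \<le> 2 powi l"
    by linarith+
  have "a \<in> dyI m l" "b \<in> dyI (Nidx n l l') (- l')"
    using l' by (auto simp: tile_def)
  then show ?thesis
    using abs_index_le_of_mem_dyI abs_le_of_two_powi_between abs_index_le_of_mem_dyI_Nidx l'(1) s assms(2)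
    by blast
qed

lemma finite_int_abs_le: "finite {k :: int. \<bar>real_of_int k\<bar> \<le> A}"
proof (rule finite_subset)
  show "{k :: int. \<bar>real_of_int k\<bar> \<le> A} \<subseteq> {- \<lceil>A\<rceil>..\<lceil>A\<rceil>}"
    by (auto simp: abs_le_iff le_ceiling_iff ceiling_le_iff) linarith+
qed simp

lemma finite_trees_containing:
  "finite {(m, l, n). (a, s, b) \<in> tree m l n \<and> (2::real) powi l \<le> M}"
proof (rule finite_subset)
  let ?box = "{m. \<bar>real_of_int m\<bar> \<le> \<bar>a\<bar> / s + 1} \<times> {l. \<bar>real_of_int l\<bar> \<le> M + 1 / s}
    \<times> {n. \<bar>real_of_int n\<bar> \<le> M * (\<bar>b\<bar> + 1 / s) + 1}"
  show "{(m, l, n). (a, s, b) \<in> tree m l n \<and> (2::real) powi l \<le> M} \<subseteq> ?box"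
    using tree_index_bounds by blast
  show "finite ?box"
    by (intro finite_cartesian_product finite_int_abs_le)
qed

lemma Times_in_borel:
  fixes A :: "'a::second_countable_topology set" and B :: "'b::second_countable_topology set"
  assumes "A \<in> sets borel" "B \<in> sets borel"
  shows "A \<times> B \<in> sets borel"
proof -
  have "A \<times> B \<in> sets (borel \<Otimes>\<^sub>M borel)"
    using assms by simp
  then show ?thesis by (metis borel_prod)
qed

lemma borel_sets_in_lebesgue: "A \<in> sets borel \<Longrightarrow> A \<in> sets lebesgue"
  by (metis sets_completionI_sets sets_lborel)

lemma Xsp_borel: "Xsp \<in> sets borel"
proof -
  have Xsp_eq: "Xsp = UNIV \<times> {0<..} \<times> UNIV"
    by (auto simp: Xsp_def)
  show ?thesis
    unfolding Xsp_eq by (intro Times_in_borel) auto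
qed

lemma tile_borel: "tile m l n \<in> sets borel"
  unfolding tile_def dyI_def by (intro Times_in_borel) auto

lemma tree_borel: "tree m l n \<in> sets borel"
  unfolding tree_def by (intro sets.countable_UN' countable_Collect) (auto intro: tile_borel)

lemma XJ_borel: "XJ J \<in> sets borel"
  unfolding XJ_def by (intro Times_in_borel) auto

lemma tree_subset_Xsp: "tree m l n \<subseteq> Xsp"
proof -
  have "tile m' l' n' \<subseteq> Xsp" for m' l' n'
    unfolding tile_def Xsp_def by (auto intro: less_trans[rotated, of "2 powi (l' - 1)"])
  then show ?thesis
    unfolding tree_def by blast
qed

lemma sets_omega_iff: "A \<in> sets omega \<longleftrightarrow> A \<subseteq> Xsp \<and> A \<in> sets lebesgue"
  by (rule sets_restrict_space_iff) (simp add: Xsp_borel borel_sets_in_lebesgue)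

lemma indicator_borel_measurable_omega:
  assumes "A \<in> sets borel"
  shows "(\<lambda>x. indicator A x :: complex) \<in> borel_measurable omega"
  using assms borel_sets_in_lebesgue
  by (intro measurable_restrict_space1 borel_measurable_indicator) auto

lemma XJ_mono:
  assumes "J \<le> J'"
  shows "XJ J \<subseteq> XJ J'"
proof -
  have "(2::real) ^ J * real J \<le> 2 ^ J' * real J'"
    using assms by (intro mult_mono power_increasing) auto
  moreover have "(2::real) powi (- int J') \<le> 2 powi (- int J)"
    using assms by (intro power_int_increasing) auto
  moreover have "(2::real) ^ J \<le> 2 ^ J'"
    using assms by (intro power_increasing) auto
  ultimately show ?thesis
    unfolding XJ_def by (intro Sigma_mono) (auto simp: subset_eq simp del: power_increasing_iff)
qed

lemma ex_mem_XJ: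
  assumes "(a, s, b) \<in> Xsp"
  shows "\<exists>J. (a, s, b) \<in> XJ J"
proof -
  have s: "0 < s" "0 < 1 / s"
    using assms by (simp_all add: Xsp_def)
  define J where "J = nat \<lceil>\<bar>a\<bar> + \<bar>b\<bar> + s + 1 / s\<rceil> + 1"
  have J: "\<bar>a\<bar> + \<bar>b\<bar> + s + 1 / s < real J" "1 \<le> real J"
    unfolding J_def by linarith+
  have "real J < 2 ^ J"
    by (rule real_less_two_power)
  moreover have "real J \<le> 2 ^ J * real J"
    using J by simp
  ultimately have "\<bar>a\<bar> < 2 ^ J * real J" "\<bar>b\<bar> < 2 ^ J * real J" "s \<le> 2 ^ J" "1 / s < 2 ^ J"
    using J s by linarith+
  moreover from \<open>1 / s < 2 ^ J\<close> have "2 powi (- int J) < s"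
    using s by (simp add: power_int_minus field_simps)
  ultimately have "(a, s, b) \<in> XJ J"
    unfolding XJ_def by (auto simp: abs_less_iff)
  then show ?thesis ..
qed

lemma eventually_mem_XJ:
  assumes "x \<in> Xsp"
  shows "\<forall>\<^sub>F J in sequentially. x \<in> XJ J"
proof -
  obtain J0 where "x \<in> XJ J0"
    using ex_mem_XJ assms by (cases x) blast
  then show ?thesis
    unfolding eventually_sequentially using XJ_mono by blast
qed

section \<open>Countable collections of trees\<close>

definition trees_Union :: "(int \<times> int \<times> int) set \<Rightarrow> pt set" where
  "trees_Union S = (\<Union>(m, l, n)\<in>S. tree m l n)"

definition tau_sum :: "(int \<times> int \<times> int) set \<Rightarrow> ennreal" where
  "tau_sum S = (\<integral>\<^sup>+ t. tau t \<partial>count_space S)"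

lemma nu_eq_INF_tau_sum: "nu A = (INF S \<in> {S. A \<subseteq> trees_Union S}. tau_sum S)"
  unfolding nu_def trees_Union_def tau_sum_def ..

lemma mem_trees_Union_iff: "x \<in> trees_Union S \<longleftrightarrow> (\<exists>m l n. (m, l, n) \<in> S \<and> x \<in> tree m l n)"
  unfolding trees_Union_def by auto

lemma trees_Union_borel: "trees_Union S \<in> sets borel"
  unfolding trees_Union_def by (intro sets.countable_UN') (auto simp: split_beta intro: tree_borel)

lemma trees_Union_in_sets_omega: "trees_Union S \<in> sets omega"
proof -
  have "trees_Union S \<in> sets borel"
    by (rule trees_Union_borel)
  moreover have "trees_Union S \<subseteq> Xsp"
    unfolding trees_Union_def using tree_subset_Xsp by blast
  ultimately show ?thesis
    by (simp add: sets_omega_iff borel_sets_in_lebesgue)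
qed

lemma nu_trees_Union_le: "nu (trees_Union S) \<le> tau_sum S"
  unfolding nu_eq_INF_tau_sum by (rule INF_lower) auto

lemma nu_tree_less_top: "nu (tree m l n) < \<infinity>"
proof -
  have "nu (tree m l n) \<le> tau_sum {(m, l, n)}"
    using nu_trees_Union_le[of "{(m, l, n)}"] by (simp add: trees_Union_def)
  also have "\<dots> < \<infinity>"
    by (simp add: tau_sum_def tau_def nn_integral_count_space_finite)
  finally show ?thesis .
qed

lemma tau_sum_eq_indicator: "tau_sum S = (\<integral>\<^sup>+ t. tau t * indicator S t \<partial>count_space UNIV)"
  unfolding tau_sum_def
  by (cases "S = UNIV") (simp_all add: nn_integral_count_space_indicator)

lemma tau_le_tau_sum:
  assumes "t \<in> S"
  shows "tau t \<le> tau_sum S"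
proof -
  have "tau t = tau_sum {t}"
    by (simp add: tau_sum_def nn_integral_count_space_finite)
  also have "\<dots> \<le> tau_sum S"
    unfolding tau_sum_eq_indicator using assms
    by (intro nn_integral_mono mult_left_mono) (auto simp: indicator_def)
  finally show ?thesis .
qed

lemma tau_sum_le_liminf:
  assumes "\<And>t. \<forall>\<^sub>F k in sequentially. (t \<in> SS k) = (t \<in> S)"
  shows "tau_sum S \<le> liminf (\<lambda>k. tau_sum (SS k))"
proof -
  have "tau t * indicator S t = liminf (\<lambda>k. tau t * indicator (SS k) t)" for t
  proof -
    have "\<forall>\<^sub>F k in sequentially. tau t * indicator (SS k) t = tau t * indicator S t"
      using assms[of t] by eventually_elim (simp add: indicator_def)
    then show ?thesis
      by (intro lim_imp_Liminf[symmetric] tendsto_eventually) auto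
  qed
  then have "tau_sum S = (\<integral>\<^sup>+ t. liminf (\<lambda>k. tau t * indicator (SS k) t) \<partial>count_space UNIV)"
    by (simp add: tau_sum_eq_indicator)
  also have "\<dots> \<le> liminf (\<lambda>k. tau_sum (SS k))"
    unfolding tau_sum_eq_indicator by (rule nn_integral_liminf) simp
  finally show ?thesis .
qed

text \<open>Makes countable products of booleans first countable, so that their compactness
  yields convergent subsequences.\<close>

instance bool :: first_countable_topology
proof
  fix x :: bool
  show "\<exists>A::nat \<Rightarrow> bool set. (\<forall>i. x \<in> A i \<and> open (A i)) \<and> (\<forall>S. open S \<and> x \<in> S \<longrightarrow> (\<exists>i. A i \<subseteq> S))"
    by (rule exI[of _ "\<lambda>_. {x}"]) (simp add: open_discrete)
qed

lemma compact_UNIV_bool_fun: "compact (UNIV :: ('a \<Rightarrow> bool) set)"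
proof -
  have "compact_space (product_topology (\<lambda>_::'a. euclidean :: bool topology) UNIV)"
    unfolding compact_space_product_topology
    by (simp add: compact_space_def finite_imp_compact)
  then show ?thesis
    by (simp add: euclidean_product_topology compact_space_def)
qed

lemma subseq_sets_pointwise_convergent:
  fixes SS :: "nat \<Rightarrow> 'a::countable set"
  obtains \<phi> S where "strict_mono \<phi>" "\<And>t. \<forall>\<^sub>F k in sequentially. (t \<in> SS (\<phi> k)) = (t \<in> S)"
proof -
  have "seq_compact (UNIV :: ('a \<Rightarrow> bool) set)"
    by (rule compact_imp_seq_compact) (rule compact_UNIV_bool_fun)
  then obtain P \<phi> where "strict_mono \<phi>" and "(((\<lambda>k t. t \<in> SS k) \<circ> \<phi>) \<longlongrightarrow> P) sequentially"
    by (rule seq_compactE) auto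
  then have lim: "((\<lambda>k t. t \<in> SS (\<phi> k)) \<longlongrightarrow> P) sequentially"
    by (simp add: o_def)
  have "\<forall>\<^sub>F k in sequentially. (t \<in> SS (\<phi> k)) \<in> {P t}" for t
  proof (rule topological_tendstoD)
    show "((\<lambda>k. t \<in> SS (\<phi> k)) \<longlongrightarrow> P t) sequentially"
      using continuous_on_tendsto_compose[OF continuous_on_product_coordinates lim] by simp
  qed (simp_all add: open_discrete)
  then show ?thesis
    using that[of \<phi> "Collect P"] \<open>strict_mono \<phi>\<close> by simp
qed

lemma eventually_not_mem_trees_Union:
  assumes conv: "\<And>t. \<forall>\<^sub>F k in sequentially. (t \<in> SS k) = (t \<in> S)"
    and small: "\<And>k. tau_sum (SS k) < ennreal M"
    and x: "x \<notin> trees_Union S"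
  shows "\<forall>\<^sub>F k in sequentially. x \<notin> trees_Union (SS k)"
proof -
  obtain a s b where x_eq: "x = (a, s, b)"
    by (cases x) auto
  define F where "F = {(m, l, n). (a, s, b) \<in> tree m l n \<and> (2::real) powi l \<le> M}"
  have "\<forall>t\<in>F. \<forall>\<^sub>F k in sequentially. t \<notin> SS k"
  proof
    fix t assume "t \<in> F"
    then have "t \<notin> S"
      using x unfolding F_def x_eq by (auto simp: mem_trees_Union_iff)
    then show "\<forall>\<^sub>F k in sequentially. t \<notin> SS k"
      using conv[of t] by simp
  qed
  then have "\<forall>\<^sub>F k in sequentially. \<forall>t\<in>F. t \<notin> SS k"
    by (rule eventually_ball_finite[OF finite_trees_containing[of a s b M, folded F_def]])
  then show ?thesis
  proof eventually_elim
    case (elim k)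
    show ?case
    proof
      assume "x \<in> trees_Union (SS k)"
      then obtain m l n where t: "(m, l, n) \<in> SS k" "x \<in> tree m l n"
        by (auto simp: mem_trees_Union_iff)
      have "tau (m, l, n) < ennreal M"
        using tau_le_tau_sum[OF t(1)] small[of k] by (rule le_less_trans)
      then have "(m, l, n) \<in> F"
        using t(2) unfolding F_def x_eq by (simp add: tau_def ennreal_less_iff)
      then show False
        using elim t(1) by blast
    qed
  qed
qed

section \<open>Lower semicontinuity of the super level measure\<close>

lemma powr_mono2_iff:
  fixes x y r :: real
  assumes "0 \<le> x" "0 \<le> y" "0 < r"
  shows "x powr r \<le> y powr r \<longleftrightarrow> x \<le> y"
  using assms by (meson not_le powr_less_mono2 powr_mono2 less_imp_le)

lemma ell_le_iff:
  assumes "nu T < \<infinity>" "0 < r" "0 \<le> lam"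
  shows "ell r g T \<le> ennreal lam \<longleftrightarrow>
    (\<integral>\<^sup>+x. ennreal (norm (indicator T x * g x) powr r) \<partial>omega) \<le> ennreal (lam powr r) * nu T"
proof -
  define A where "A = (\<integral>\<^sup>+x. ennreal (norm (indicator T x * g x) powr r) \<partial>omega)"
  obtain d where d: "nu T = ennreal d" "0 \<le> d"
    using assms(1) by (cases "nu T") auto
  have ell: "ell r g T = enn_powr A (1 / r) / ennreal (d powr (1 / r))"
    using d by (simp add: ell_def Lr_norm_def A_def enn_powr_def)
  show ?thesis
  proof (cases A)
    case (real a)
    show ?thesis
    proof (cases "d = 0")
      case True
      then show ?thesis
        using real assms unfolding ell A_def[symmetric] d
        by (auto simp: enn_powr_def ennreal_eq_0_iff top_unique)
    next
      case False
      then have "0 < d"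
        using d by simp
      have "ell r g T \<le> ennreal lam \<longleftrightarrow> a powr (1/r) / d powr (1/r) \<le> lam"
        using real \<open>0 < d\<close> assms(3) by (simp add: ell enn_powr_def divide_ennreal)
      also have "\<dots> \<longleftrightarrow> (a powr (1/r)) powr r \<le> (lam * d powr (1/r)) powr r"
        using real \<open>0 < d\<close> assms by (simp add: divide_le_eq powr_mono2_iff)
      also have "\<dots> \<longleftrightarrow> A \<le> ennreal (lam powr r) * nu T"
        using real assms d by (simp add: powr_powr powr_mult ennreal_mult'[symmetric])
      finally show ?thesis
        unfolding A_def .
    qed
  next
    case top
    then have "ell r g T = \<infinity>"
      by (simp add: ell enn_powr_def ennreal_top_divide)
    moreover have "ennreal (lam powr r) * nu T \<noteq> \<infinity>"
      using d by (simp add: ennreal_mult'[symmetric])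
    ultimately show ?thesis
      using top A_def by (auto simp: top_unique)
  qed
qed

lemma ell_le_Linf_nu: "ell r g (tree m l n) \<le> Linf_nu r g"
  unfolding Linf_nu_def by (rule SUP_upper2[of "(m, l, n)"]) auto

lemma Linf_nu_le_of_eventually_le:
  assumes meas: "\<And>k. g k \<in> borel_measurable omega"
    and r: "0 < r" and lam: "0 \<le> lam"
    and bound: "\<And>k. Linf_nu r (g k) \<le> ennreal lam"
    and ev: "\<And>x. x \<in> Xsp \<Longrightarrow> \<forall>\<^sub>F k in sequentially. norm (h x) \<le> norm (g k x)"
  shows "Linf_nu r h \<le> ennreal lam"
  unfolding Linf_nu_def
proof (rule SUP_least, clarify)
  fix m l n
  define T where "T = tree m l n"
  have T: "nu T < \<infinity>"
    unfolding T_def by (rule nu_tree_less_top)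
  define u where "u g x = ennreal (norm (indicator T x * g x) powr r)" for g :: "pt \<Rightarrow> complex" and x
  have "integral\<^sup>N omega (u h) \<le> (\<integral>\<^sup>+x. liminf (\<lambda>k. u (g k) x) \<partial>omega)"
  proof (intro nn_integral_mono Liminf_bounded)
    fix x assume "x \<in> space omega"
    then have "\<forall>\<^sub>F k in sequentially. norm (h x) \<le> norm (g k x)"
      by (intro ev) simp
    then show "\<forall>\<^sub>F k in sequentially. u h x \<le> u (g k) x"
      unfolding u_def
      by (rule eventually_mono) (use r in \<open>auto simp: norm_mult intro!: ennreal_leI powr_mono2 mult_left_mono\<close>)
  qed
  also have "\<dots> \<le> liminf (\<lambda>k. integral\<^sup>N omega (u (g k)))"
  proof (rule nn_integral_liminf)
    fix k
    have "(\<lambda>x. indicator T x * g k x) \<in> borel_measurable omega"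
      unfolding T_def
      by (intro borel_measurable_times indicator_borel_measurable_omega tree_borel meas)
    then show "u (g k) \<in> borel_measurable omega"
      unfolding u_def by measurable
  qed
  also have "\<dots> \<le> ennreal (lam powr r) * nu T"
  proof (rule Liminf_le)
    have "ell r (g k) T \<le> ennreal lam" for k
      unfolding T_def using ell_le_Linf_nu bound by (rule order_trans)
    then show "\<forall>\<^sub>F k in sequentially. integral\<^sup>N omega (u (g k)) \<le> ennreal (lam powr r) * nu T"
      using ell_le_iff[OF T r lam] unfolding u_def by simp
  qed simp
  finally show "ell r h (tree m l n) \<le> ennreal lam"
    using ell_le_iff[OF T r lam] unfolding u_def T_def by simp
qed

lemma super_level_lessE:
  assumes "super_level r h lam < ennreal M" "0 < r"
  obtains S where "tau_sum S < ennreal M"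
    "Linf_nu r (\<lambda>x. indicator (Xsp - trees_Union S) x * h x) \<le> ennreal lam"
proof -
  obtain B where B: "Linf_nu r (\<lambda>x. indicator (Xsp - B) x * h x) \<le> ennreal lam" "nu B < ennreal M"
    using assms(1) unfolding super_level_def by (auto simp: INF_less_iff)
  then obtain S where S: "B \<subseteq> trees_Union S" "tau_sum S < ennreal M"
    unfolding nu_eq_INF_tau_sum by (auto simp: INF_less_iff)
  have "Linf_nu r (\<lambda>x. indicator (Xsp - trees_Union S) x * h x)
      \<le> Linf_nu r (\<lambda>x. indicator (Xsp - B) x * h x)"
    using S(1) assms(2) by (intro Linf_nu_mono) (auto simp: indicator_def)
  then show ?thesis
    using that S(2) B(1) order_trans by blast
qed

lemma Linf_nu_le_at_limit_collection:
  assumes f: "f \<in> borel_measurable omega" and r: "0 < r" and lam: "0 \<le> lam"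
    and J: "filterlim J sequentially sequentially"
    and conv: "\<And>t. \<forall>\<^sub>F k in sequentially. (t \<in> SS k) = (t \<in> S)"
    and small: "\<And>k. tau_sum (SS k) < ennreal M"
    and bound: "\<And>k. Linf_nu r (\<lambda>x. indicator (Xsp - trees_Union (SS k)) x * (indicator (XJ (J k)) x * f x))
      \<le> ennreal lam"
  shows "Linf_nu r (\<lambda>x. indicator (Xsp - trees_Union S) x * f x) \<le> ennreal lam"
proof (rule Linf_nu_le_of_eventually_le[OF _ r lam bound])
  fix k
  show "(\<lambda>x. indicator (Xsp - trees_Union (SS k)) x * (indicator (XJ (J k)) x * f x))
      \<in> borel_measurable omega"
    by (intro borel_measurable_times indicator_borel_measurable_omega sets.Diff
        Xsp_borel trees_Union_borel XJ_borel f)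
next
  fix x assume x: "x \<in> Xsp"
  show "\<forall>\<^sub>F k in sequentially. norm (indicator (Xsp - trees_Union S) x * f x)
      \<le> norm (indicator (Xsp - trees_Union (SS k)) x * (indicator (XJ (J k)) x * f x))"
  proof (cases "x \<in> trees_Union S")
    case False
    have "\<forall>\<^sub>F k in sequentially. x \<notin> trees_Union (SS k)"
      using conv small False by (rule eventually_not_mem_trees_Union)
    moreover have "\<forall>\<^sub>F k in sequentially. x \<in> XJ (J k)"
      using eventually_compose_filterlim[OF eventually_mem_XJ[OF x] J] .
    ultimately show ?thesis
      by eventually_elim (use x False in simp)
  qed simp
qed

lemma super_level_le_SUP_XJ:
  assumes f: "f \<in> borel_measurable omega" and r: "0 < r" and lam: "0 \<le> lam"
  shows "super_level r f lam \<le> (SUP J. super_level r (\<lambda>x. indicator (XJ J) x * f x) lam)"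
    (is "_ \<le> ?L")
proof (rule ennreal_le_epsilon)
  fix e :: real assume "?L < top" "0 < e"
  then obtain L where L: "?L = ennreal L" "0 \<le> L"
    by (cases ?L) auto
  define M where "M = L + e"
  have M: "?L + ennreal e = ennreal M" "?L < ennreal M"
    using L \<open>0 < e\<close> by (simp_all add: M_def ennreal_less_iff)
  have "\<exists>S. tau_sum S < ennreal M \<and>
      Linf_nu r (\<lambda>x. indicator (Xsp - trees_Union S) x * (indicator (XJ J) x * f x)) \<le> ennreal lam" for J
    using super_level_lessE[OF le_less_trans[OF SUP_upper M(2)] r] by blast
  then obtain SS where small: "\<And>J. tau_sum (SS J) < ennreal M"
    and SS: "\<And>J. Linf_nu r (\<lambda>x. indicator (Xsp - trees_Union (SS J)) x * (indicator (XJ J) x * f x))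
      \<le> ennreal lam"
    by metis
  obtain \<phi> S where \<phi>: "strict_mono \<phi>" and conv: "\<And>t. \<forall>\<^sub>F k in sequentially. (t \<in> SS (\<phi> k)) = (t \<in> S)"
    using subseq_sets_pointwise_convergent[of SS] by blast
  have "liminf (\<lambda>k. tau_sum (SS (\<phi> k))) \<le> ennreal M"
    by (rule Liminf_le) (auto simp: small less_imp_le)
  with tau_sum_le_liminf[OF conv] have "tau_sum S \<le> ennreal M"
    by (rule order_trans)
  have "Linf_nu r (\<lambda>x. indicator (Xsp - trees_Union S) x * f x) \<le> ennreal lam"
    using f r lam filterlim_subseq[OF \<phi>] conv small SS by (rule Linf_nu_le_at_limit_collection)
  then have "super_level r f lam \<le> nu (trees_Union S)"
    unfolding super_level_def by (intro INF_lower) (simp add: trees_Union_in_sets_omega)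
  also have "\<dots> \<le> tau_sum S"
    by (rule nu_trees_Union_le)
  also have "\<dots> \<le> ?L + ennreal e"
    using \<open>tau_sum S \<le> ennreal M\<close> M(1) by simp
  finally show "super_level r f lam \<le> ?L + ennreal e" .
qed

lemma SUP_super_level_XJ:
  assumes "f \<in> borel_measurable omega" "0 < r" "0 \<le> lam"
  shows "(SUP J. super_level r (\<lambda>x. indicator (XJ J) x * f x) lam) = super_level r f lam"
  using super_level_le_SUP_XJ[OF assms] super_level_mono[OF norm_indicator_mult_le \<open>0 < r\<close>]
  by (intro antisym SUP_least) auto

section \<open>Monotone convergence of the quasi-norms\<close>

definition Lq_nu_integral :: "real \<Rightarrow> real \<Rightarrow> (pt \<Rightarrow> complex) \<Rightarrow> ennreal" where
  "Lq_nu_integral q r f =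
     (\<integral>\<^sup>+ lam\<in>{0<..}. ennreal (q * lam powr (q - 1)) * super_level r f lam \<partial>lborel)"

lemma Lq_nu_eq: "Lq_nu q r f = enn_powr (Lq_nu_integral q r f) (1 / q)"
  unfolding Lq_nu_def Lq_nu_integral_def ..

lemma borel_measurable_antimono_ennreal:
  fixes h :: "real \<Rightarrow> ennreal"
  assumes "\<And>x y. x \<le> y \<Longrightarrow> h y \<le> h x"
  shows "h \<in> borel_measurable lborel"
proof -
  have "h \<in> borel_measurable borel"
  proof (rule borel_measurableI_greater)
    fix y
    have "is_interval {x. y < h x}"
      unfolding is_interval_1 using assms by (auto intro: less_le_trans)
    then show "{x \<in> space borel. y < h x} \<in> sets borel"
      using real_interval_borel_measurable by simp
  qed
  then show ?thesis
    by simp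
qed

lemma Lq_nu_integral_SUP_XJ:
  assumes f: "f \<in> borel_measurable omega" and r: "0 < r"
  shows "Lq_nu_integral q r f = (SUP J. Lq_nu_integral q r (\<lambda>x. indicator (XJ J) x * f x))"
proof -
  define g where "g J lam = ennreal (q * lam powr (q - 1))
    * super_level r (\<lambda>x. indicator (XJ J) x * f x) lam * indicator {0<..} lam" for J lam
  have "incseq g"
    unfolding incseq_def le_fun_def g_def
    by (auto intro!: mult_right_mono mult_left_mono super_level_mono norm_indicator_mult_mono
        XJ_mono r)
  moreover have "g J \<in> borel_measurable lborel" for J
  proof -
    have "super_level r (\<lambda>x. indicator (XJ J) x * f x) \<in> borel_measurable lborel"
      by (rule borel_measurable_antimono_ennreal) (rule super_level_antimono)
    then show ?thesis
      unfolding g_def by measurable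
  qed
  moreover have "(SUP J. g J lam) = ennreal (q * lam powr (q - 1)) * super_level r f lam * indicator {0<..} lam"
    for lam
    using SUP_super_level_XJ[OF f r, of lam]
    by (cases "0 < lam") (simp_all add: g_def flip: SUP_mult_left_ennreal)
  ultimately show ?thesis
    unfolding Lq_nu_integral_def g_def[symmetric]
    by (simp add: nn_integral_monotone_convergence_SUP[symmetric])
qed

lemma enn_powr_le_twice_SUP:
  fixes b :: "'i \<Rightarrow> ennreal"
  assumes a: "a = (SUP i. b i)" "a \<noteq> \<infinity>" and q: "0 < q"
  obtains i where "enn_powr a (1 / q) \<le> ennreal 2 * enn_powr (b i) (1 / q)"
proof (cases "a = 0")
  case True
  then show ?thesis
    using that by (simp add: enn_powr_def)
next
  case False
  obtain x where x: "a = ennreal x" "0 < x"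
    using a(2) False by (cases a) auto
  have "1 < (2::real) powr q"
    using q by simp
  then have "ennreal (x / 2 powr q) < a"
    using x by (simp add: ennreal_less_iff divide_less_eq)
  then obtain i where i: "ennreal (x / 2 powr q) < b i"
    unfolding a(1) by (auto simp: less_SUP_iff)
  have "b i \<le> a"
    unfolding a(1) by (rule SUP_upper) simp
  then obtain y where y: "b i = ennreal y" "0 \<le> y"
    using a(2) by (cases "b i") (auto simp: top_unique)
  have "x \<le> 2 powr q * y"
    using i y x \<open>1 < 2 powr q\<close> by (simp add: ennreal_less_iff divide_less_eq mult.commute)
  then have "x powr (1 / q) \<le> (2 powr q * y) powr (1 / q)"
    using x q by (intro powr_mono2) auto
  also have "\<dots> = 2 * y powr (1 / q)"
    using y q by (simp add: powr_mult powr_powr)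
  finally have "enn_powr a (1 / q) \<le> ennreal (2 * y powr (1 / q))"
    using x by (simp add: enn_powr_def)
  then show ?thesis
    using that[of i] y by (simp add: enn_powr_def ennreal_mult)
qed

theorem lemma5p4:
  fixes q r :: real
  assumes "0 < q" and "0 < r"
  shows "\<exists>C::real. \<forall>f :: pt \<Rightarrow> complex.
           f \<in> borel_measurable omega \<and> Lq_nu q r f < \<infinity> \<longrightarrow>
           (\<exists>J::nat. Lq_nu q r (\<lambda>x. indicator (XJ J) x * f x) \<le> Lq_nu q r f \<and>
                     Lq_nu q r f \<le> ennreal C * Lq_nu q r (\<lambda>x. indicator (XJ J) x * f x))"
proof (rule exI[of _ 2], intro allI impI)
  fix f :: "pt \<Rightarrow> complex"
  assume "f \<in> borel_measurable omega \<and> Lq_nu q r f < \<infinity>"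
  then have f: "f \<in> borel_measurable omega" and "Lq_nu_integral q r f \<noteq> \<infinity>"
    by (auto simp: Lq_nu_eq enn_powr_def)
  then obtain J where "Lq_nu q r f \<le> ennreal 2 * Lq_nu q r (\<lambda>x. indicator (XJ J) x * f x)"
    using enn_powr_le_twice_SUP[OF Lq_nu_integral_SUP_XJ[OF f \<open>0 < r\<close>] _ \<open>0 < q\<close>]
    unfolding Lq_nu_eq by blast
  moreover have "Lq_nu q r (\<lambda>x. indicator (XJ J) x * f x) \<le> Lq_nu q r f"
    using norm_indicator_mult_le \<open>0 < r\<close> \<open>0 < q\<close> by (rule Lq_nu_mono)
  ultimately show "\<exists>J. Lq_nu q r (\<lambda>x. indicator (XJ J) x * f x) \<le> Lq_nu q r f \<and>
      Lq_nu q r f \<le> ennreal 2 * Lq_nu q r (\<lambda>x. indicator (XJ J) x * f x)"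
    by blast
qed


end
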